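(* Let $0\le\gamma<1$, $p\in(0,2]$, and let $f$ be analytic in $\Omega_\gamma$ with $|f(z)|\le1$ on $\Omega_\gamma$, with power series $f(z)=\sum_{n=0}^\infty a_nz^n$ in $\mathbb{D}$. Let $a,b,c>-1$ be real parameters for which the Gaussian hypergeometric function $F(x)={}_2F_1(a,b;c;x)=\sum_{n=0}^\infty c_nx^n$, $c_n=\frac{(a)_n(b)_n}{(c)_n\,n!}$, is defined, and assume that all $c_n$ with $n\ge1$ have the same sign. Let $R^\gamma_p$ be the minimal positive root in $(0,1)$ of the equation $|F(a,b;c;x)-1|=(1+\gamma)\frac{p}{2}$. Then $$|a_0|^p+\sum_{n=1}^\infty|c_n||a_n|r^n\le1\quad\text{for all }0\le r\le R^\gamma_p,$$ and the number $R^\gamma_p$ cannot be improved.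
   Context: For $0\le\gamma<1$, $\Omega_\gamma:=\{z\in\mathbb{C}: |z+\frac{\gamma}{1-\gamma}|<\frac{1}{1-\gamma}\}$, a disk containing the unit disk $\mathbb{D}$. $(x)_n$ is the Pochhammer symbol: $(x)_0=1$, $(x)_n=x(x+1)\cdots(x+n-1)$ for $n\ge1$. *)

theory Defs
  imports "HOL-Analysis.Analysis"
begin

definition Omega :: "real \<Rightarrow> complex set" where
  "Omega \<gamma> = ball (- complex_of_real (\<gamma> / (1 - \<gamma>))) (1 / (1 - \<gamma>))"

definition hyp_coeff :: "real \<Rightarrow> real \<Rightarrow> real \<Rightarrow> nat \<Rightarrow> real" where
  "hyp_coeff a b c n = pochhammer a n * pochhammer b n / (pochhammer c n * fact n)"

definition hyp2F1 :: "real \<Rightarrow> real \<Rightarrow> real \<Rightarrow> real \<Rightarrow> real" where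
  "hyp2F1 a b c x = (\<Sum>n. hyp_coeff a b c n * x ^ n)"

end

theory Submission
  imports Defs "HOL-Complex_Analysis.Complex_Analysis" "HOL-Real_Asymp.Real_Asymp"
begin

text \<open>
  The map \<open>z \<mapsto> z / (1 + \<gamma> - \<gamma> z)\<close> sends \<open>\<Omega>\<^sub>\<gamma>\<close> onto the unit disc and has nonnegative
  Taylor coefficients, whose powers have column sums \<open>1 / (1 + \<gamma>)\<close>. Writing \<open>f\<close> as a bounded
  function of this map and applying Wiener's inequality \<open>|b\<^sub>k| \<le> 1 - |b\<^sub>0|\<^sup>2\<close> gives
  \<open>|a\<^sub>n| \<le> (1 - |a\<^sub>0|\<^sup>2) / (1 + \<gamma>)\<close> for \<open>n \<ge> 1\<close>. By the sign condition
  \<open>\<Sum>\<^bsub>n \<ge> 1\<^esub> |c\<^sub>n| r\<^sup>n = |F(r) - 1|\<close>, which increases with \<open>r\<close>, so for \<open>r \<le> R\<close> the Bohr sum is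
  at most \<open>|a\<^sub>0|\<^sup>p + (1 - |a\<^sub>0|\<^sup>2) p / 2 \<le> 1\<close> (weighted AM-GM). For sharpness, the functions
  \<open>(\<alpha> - w) / (1 - \<alpha> w)\<close> with \<open>w = \<gamma> + (1 - \<gamma>) z\<close> violate the inequality beyond \<open>R\<close> as
  \<open>\<alpha> \<rightarrow> 1\<close>.
\<close>

section \<open>Elementary inequalities\<close>

lemma powr_le_affine:
  fixes u q :: real
  assumes "0 < u" "0 \<le> q" "q \<le> 1"
  shows "u powr q \<le> q * u + (1 - q)"
  using Youngs_inequality_0[of q "1 - q" u 1] assms by simp

lemma powr_of_square:
  fixes t q :: real
  assumes "0 < t"
  shows "(t\<^sup>2) powr q = t powr (2 * q)"
proof -
  have "t\<^sup>2 = t powr (real 2)" using assms by (simp add: powr_realpow)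
  then show ?thesis by (simp add: powr_powr)
qed

lemma powr_plus_le_1:
  fixes t p :: real
  assumes t: "0 \<le> t" "t \<le> 1" and p: "0 < p" "p \<le> 2"
  shows "t powr p + (1 - t\<^sup>2) * p / 2 \<le> 1"
proof (cases "t = 0")
  case True
  then show ?thesis using p by simp
next
  case False
  then have "t powr p = (t\<^sup>2) powr (p / 2)"
    using t by (simp add: powr_of_square)
  also have "\<dots> \<le> p / 2 * t\<^sup>2 + (1 - p / 2)"
    using False p by (intro powr_le_affine) auto
  finally show ?thesis by (simp add: field_simps)
qed

lemma one_minus_powr_le:
  fixes t p :: real
  assumes t: "0 < t" "t \<le> 1" and p: "0 < p" "p \<le> 2"
  shows "1 - t powr p \<le> p / 2 * (1 - t\<^sup>2) / t\<^sup>2"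
proof -
  define P where "P = t powr p"
  have P: "0 < P" "P \<le> 1" using t p by (auto simp: P_def powr_le1)
  have "1 / P = (1 / t\<^sup>2) powr (p / 2)"
    using t by (simp add: P_def powr_divide powr_of_square)
  also have "\<dots> \<le> p / 2 * (1 / t\<^sup>2) + (1 - p / 2)"
    using t p by (intro powr_le_affine) auto
  finally have "1 - P \<le> P * (p / 2 * (1 - t\<^sup>2) / t\<^sup>2)"
    using t P by (simp add: field_simps)
  also have "\<dots> \<le> p / 2 * (1 - t\<^sup>2) / t\<^sup>2"
    using t P p by (intro mult_left_le_one_le) (auto simp: power_le_one)
  finally show ?thesis by (simp add: P_def)
qed

lemma nonneg_powser_term_mono:
  fixes d :: "nat \<Rightarrow> real"
  assumes "0 \<le> d n" "0 \<le> x" "x \<le> y"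
  shows "d n * x ^ Suc n \<le> d n * y ^ Suc n"
  by (rule mult_left_mono[OF power_mono]) (use assms in auto)

lemma summable_nonneg_powser_le:
  fixes d :: "nat \<Rightarrow> real"
  assumes d: "\<And>n. 0 \<le> d n" and sy: "summable (\<lambda>n. d n * y ^ Suc n)" and xy: "0 \<le> x" "x \<le> y"
  shows "summable (\<lambda>n. d n * x ^ Suc n)"
proof (rule summable_comparison_test'[OF sy])
  fix n
  show "norm (d n * x ^ Suc n) \<le> d n * y ^ Suc n"
    using nonneg_powser_term_mono[OF d xy] d xy by simp
qed

lemma suminf_nonneg_powser_mono:
  fixes d :: "nat \<Rightarrow> real"
  assumes d: "\<And>n. 0 \<le> d n" and sy: "summable (\<lambda>n. d n * y ^ Suc n)" and xy: "0 \<le> x" "x \<le> y"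
  shows "(\<Sum>n. d n * x ^ Suc n) \<le> (\<Sum>n. d n * y ^ Suc n)"
  using nonneg_powser_term_mono[OF d xy] summable_nonneg_powser_le[OF d sy xy] sy
  by (rule suminf_le)

lemma suminf_nonneg_powser_strict_mono:
  fixes d :: "nat \<Rightarrow> real"
  assumes d: "\<And>n. 0 \<le> d n" and sy: "summable (\<lambda>n. d n * y ^ Suc n)" and xy: "0 \<le> x" "x < y"
    and pos: "0 < (\<Sum>n. d n * x ^ Suc n)"
  shows "(\<Sum>n. d n * x ^ Suc n) < (\<Sum>n. d n * y ^ Suc n)"
proof -
  have sx: "summable (\<lambda>n. d n * x ^ Suc n)"
    using summable_nonneg_powser_le[OF d sy] xy by simp
  obtain i where "0 < d i * x ^ Suc i"
    using pos sx d xy by (subst (asm) suminf_pos_iff) auto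
  then have "0 < d i"
    using d[of i] xy by (simp add: zero_less_mult_iff)
  then have "d i * x ^ Suc i < d i * y ^ Suc i"
    using xy by (intro mult_strict_left_mono power_strict_mono) auto
  then have "0 < (\<Sum>n. d n * y ^ Suc n - d n * x ^ Suc n)"
    using nonneg_powser_term_mono[OF d, where x=x and y=y] xy
    by (intro suminf_pos2[of _ i] summable_diff sy sx) auto
  then show ?thesis
    using suminf_diff[OF sy sx] by simp
qed

section \<open>Hypergeometric coefficients\<close>

lemma hyp_coeff_0 [simp]: "hyp_coeff a b c 0 = 1"
  by (simp add: hyp_coeff_def)

lemma hyp_coeff_Suc:
  assumes "\<forall>n::nat. c \<noteq> - real n"
  shows "hyp_coeff a b c (Suc n) =
    hyp_coeff a b c n * ((a + n) * (b + n) / ((c + n) * (n + 1)))"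
proof -
  have "pochhammer c n \<noteq> 0"
    using assms by (auto simp: pochhammer_eq_0_iff)
  moreover have "c + n \<noteq> 0"
    using assms[rule_format, of n] by linarith
  ultimately show ?thesis
    by (simp add: hyp_coeff_def pochhammer_Suc field_simps)
qed

lemma summable_abs_hyp_coeff:
  fixes a b c x :: real
  assumes c_nonpole: "\<forall>n::nat. c \<noteq> - real n" and x: "0 \<le> x" "x < 1"
  shows "summable (\<lambda>n. \<bar>hyp_coeff a b c n\<bar> * x ^ n)"
proof -
  define \<rho> where "\<rho> n = (a + n) * (b + n) / ((c + n) * (n + 1))" for n :: nat
  have "\<rho> \<longlonglongrightarrow> 1"
    unfolding \<rho>_def by real_asymp
  then have "(\<lambda>n. x * \<bar>\<rho> n\<bar>) \<longlonglongrightarrow> x * \<bar>1\<bar>"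
    by (intro tendsto_intros)
  then have "eventually (\<lambda>n. x * \<bar>\<rho> n\<bar> < (1 + x) / 2) sequentially"
    using x by (intro order_tendstoD) auto
  then obtain N where N: "\<And>n. n \<ge> N \<Longrightarrow> x * \<bar>\<rho> n\<bar> < (1 + x) / 2"
    by (auto simp: eventually_sequentially)
  show ?thesis
  proof (rule summable_ratio_test[of "(1 + x) / 2" N])
    fix n assume "N \<le> n"
    then have "(\<bar>hyp_coeff a b c n\<bar> * x ^ n) * (x * \<bar>\<rho> n\<bar>)
        \<le> (\<bar>hyp_coeff a b c n\<bar> * x ^ n) * ((1 + x) / 2)"
      using less_imp_le[OF N] x by (intro mult_left_mono) auto
    then show "norm (\<bar>hyp_coeff a b c (Suc n)\<bar> * x ^ Suc n)
        \<le> (1 + x) / 2 * norm (\<bar>hyp_coeff a b c n\<bar> * x ^ n)"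
      using x by (simp add: hyp_coeff_Suc[OF c_nonpole] \<rho>_def abs_mult mult_ac)
  qed (use x in simp)
qed

lemma abs_hyp2F1_minus_1:
  assumes c_nonpole: "\<forall>n::nat. c \<noteq> - real n"
    and sign: "(\<forall>n\<ge>1. hyp_coeff a b c n \<ge> 0) \<or> (\<forall>n\<ge>1. hyp_coeff a b c n \<le> 0)"
    and x: "0 \<le> x" "x < 1"
  shows "\<bar>hyp2F1 a b c x - 1\<bar> = (\<Sum>n. \<bar>hyp_coeff a b c (Suc n)\<bar> * x ^ Suc n)"
proof -
  obtain \<sigma> :: real where \<sigma>: "\<bar>\<sigma>\<bar> = 1" "\<And>n. hyp_coeff a b c (Suc n) = \<sigma> * \<bar>hyp_coeff a b c (Suc n)\<bar>"
  proof (cases "\<forall>n\<ge>1. hyp_coeff a b c n \<ge> 0")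
    case True
    then show ?thesis by (intro that[of 1]) auto
  next
    case False
    then have "\<forall>n\<ge>1. hyp_coeff a b c n \<le> 0" using sign by blast
    then show ?thesis by (intro that[of "-1"]) auto
  qed
  have sabs: "summable (\<lambda>n. \<bar>hyp_coeff a b c n\<bar> * x ^ n)"
    by (rule summable_abs_hyp_coeff[OF c_nonpole x])
  then have summable_tail: "summable (\<lambda>n. \<bar>hyp_coeff a b c (Suc n)\<bar> * x ^ Suc n)"
    using summable_Suc_iff[of "\<lambda>n. \<bar>hyp_coeff a b c n\<bar> * x ^ n"] by simp
  have "summable (\<lambda>n. hyp_coeff a b c n * x ^ n)"
    by (rule summable_rabs_cancel) (use sabs x in \<open>simp add: abs_mult power_abs\<close>)
  from suminf_split_head[OF this]
  have "hyp2F1 a b c x - 1 = (\<Sum>n. hyp_coeff a b c (Suc n) * x ^ Suc n)"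
    by (simp add: hyp2F1_def)
  also have "\<dots> = (\<Sum>n. \<sigma> * (\<bar>hyp_coeff a b c (Suc n)\<bar> * x ^ Suc n))"
    by (subst \<sigma>(2)) (simp add: mult.assoc)
  also have "\<dots> = \<sigma> * (\<Sum>n. \<bar>hyp_coeff a b c (Suc n)\<bar> * x ^ Suc n)"
    by (rule suminf_mult[OF summable_tail])
  finally have "hyp2F1 a b c x - 1 = \<sigma> * (\<Sum>n. \<bar>hyp_coeff a b c (Suc n)\<bar> * x ^ Suc n)" .
  moreover have "0 \<le> (\<Sum>n. \<bar>hyp_coeff a b c (Suc n)\<bar> * x ^ Suc n)"
    using x by (intro suminf_nonneg summable_tail) auto
  ultimately show ?thesis
    using \<sigma>(1) by (simp add: abs_mult)
qed

section \<open>Coefficients of bounded holomorphic functions on the unit disc\<close>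

lemma Schwarz_Pick_deriv_0:
  fixes H :: "complex \<Rightarrow> complex"
  assumes hol: "H holomorphic_on ball 0 1" and bd: "\<And>z. z \<in> ball 0 1 \<Longrightarrow> norm (H z) \<le> 1"
  shows "norm (deriv H 0) \<le> 1 - (norm (H 0))\<^sup>2"
proof (cases "\<exists>v\<in>ball 0 1. norm (H v) = 1")
  case True
  then obtain v where v: "v \<in> ball 0 1" "norm (H v) = 1" by blast
  have "H constant_on ball 0 1"
    using bd v by (intro maximum_modulus_principle[OF hol open_ball connected_ball open_ball subset_refl v(1)]) auto
  then obtain w where w: "\<And>z. z \<in> ball 0 1 \<Longrightarrow> H z = w"
    by (auto simp: constant_on_def)
  have "deriv H 0 = deriv (\<lambda>_. w) 0"
    using w by (intro deriv_cong_ev eventually_nhds_in_open[of "ball 0 1", THEN eventually_mono]) auto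
  then show ?thesis
    using v w by simp
next
  case False
  define a where "a = H 0"
  have lt: "norm (H z) < 1" if "z \<in> ball 0 1" for z
    using False bd[OF that] that by force
  then have a: "norm a < 1" by (simp add: a_def)
  define B where "B = Moebius_function 0 a \<circ> H"
  have holB: "B holomorphic_on ball 0 1"
    unfolding B_def using lt
    by (intro holomorphic_on_compose_gen[OF hol Moebius_function_holomorphic[OF a]]) auto
  have B0: "B 0 = 0"
    by (simp add: B_def a_def Moebius_function_eq_zero)
  have "norm (B z) < 1" if "norm z < 1" for z
    unfolding B_def o_def using that lt by (intro Moebius_function_norm_lt_1[OF a]) auto
  then have dB: "norm (deriv B 0) \<le> 1"
    using Schwarz_Lemma(2)[OF holB B0, of 0] by auto
  have a2: "(norm a)\<^sup>2 < 1" using a by (simp add: abs_square_less_1)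
  have cnj_a: "1 - cnj a * a = of_real (1 - (norm a)\<^sup>2)"
    by (metis complex_norm_square mult.commute of_real_1 of_real_diff)
  have den: "1 - cnj a * a \<noteq> 0"
    using a2 unfolding cnj_a of_real_eq_0_iff by simp
  have dH: "(H has_field_derivative deriv H 0) (at 0)"
    using hol by (intro holomorphic_derivI[of H "ball 0 1"]) auto
  have "((\<lambda>z. (H z - a) / (1 - cnj a * H z)) has_field_derivative deriv H 0 / (1 - cnj a * a)) (at 0)"
    apply (rule derivative_eq_intros dH refl)+
    using den by (simp_all add: a_def[symmetric] power2_eq_square)
  then have "deriv B 0 = deriv H 0 / of_real (1 - (norm a)\<^sup>2)"
    by (intro DERIV_imp_deriv) (simp add: B_def o_def Moebius_function_simple cnj_a)
  then have "norm (deriv B 0) = norm (deriv H 0) / (1 - (norm a)\<^sup>2)"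
    using a2 by (simp add: norm_divide del: of_real_diff)
  then show ?thesis
    using dB a2 by (simp add: divide_le_eq a_def)
qed

lemma sum_root_unity_powers:
  assumes k: "k \<ge> 1"
  defines "\<omega> \<equiv> exp (2 * of_real pi * \<i> / of_nat k)"
  shows "(\<Sum>j<k. (\<omega> ^ n) ^ j) = (if k dvd n then of_nat k else 0)"
proof -
  have \<omega>_pow: "\<omega> ^ n = exp (2 * of_real pi * \<i> * of_nat n / of_nat k)" for n
    unfolding \<omega>_def by (simp add: exp_of_nat_mult[symmetric] algebra_simps)
  show ?thesis
  proof (cases "k dvd n")
    case True
    then have "\<omega> ^ n = 1"
      using complex_root_unity_eq_1[OF k, of n] \<omega>_pow by simp
    then show ?thesis using True by simp
  next
    case False
    then have "\<omega> ^ n \<noteq> 1"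
      using complex_root_unity_eq_1[OF k, of n] \<omega>_pow by simp
    moreover have "\<omega> ^ k = 1"
      using complex_root_unity_eq_1[OF k, of k] \<omega>_pow[of k] by simp
    then have "(\<omega> ^ n) ^ k = 1"
      by (metis power_mult mult.commute power_one)
    ultimately show ?thesis
      using False by (simp add: geometric_sum)
  qed
qed

lemma norm_root_unity:
  "norm (exp (2 * of_real pi * \<i> / of_nat k)) = 1"
  by (metis norm_exp_i_times mult.commute times_divide_eq_right of_real_divide of_real_mult
      of_real_numeral of_real_of_nat_eq)

lemma power_series_root_unity_filter:
  fixes g :: "nat \<Rightarrow> complex" and G :: "complex \<Rightarrow> complex"
  assumes sums: "\<And>z. norm z < 1 \<Longrightarrow> (\<lambda>n. g n * z ^ n) sums G z"
    and k: "k \<ge> 1" and u: "norm u < 1"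
  defines "\<omega> \<equiv> exp (2 * of_real pi * \<i> / of_nat k)"
  shows "(\<lambda>m. g (m * k) * (u ^ k) ^ m) sums ((\<Sum>j<k. G (\<omega> ^ j * u)) / of_nat k)"
proof -
  have norm_\<omega>: "norm \<omega> = 1"
    unfolding \<omega>_def by (rule norm_root_unity)
  have "(\<lambda>n. \<Sum>j<k. g n * (\<omega> ^ j * u) ^ n) sums (\<Sum>j<k. G (\<omega> ^ j * u))"
    using u by (intro sums_sum sums) (simp add: norm_mult norm_power norm_\<omega>)
  moreover have "(\<Sum>j<k. g n * (\<omega> ^ j * u) ^ n) = g n * u ^ n * (if k dvd n then of_nat k else 0)" for n
  proof -
    have "(\<Sum>j<k. g n * (\<omega> ^ j * u) ^ n) = g n * u ^ n * (\<Sum>j<k. (\<omega> ^ n) ^ j)"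
      by (simp add: sum_distrib_left power_mult_distrib mult_ac flip: power_mult)
    then show ?thesis
      using sum_root_unity_powers[OF k] by (simp add: \<omega>_def)
  qed
  ultimately have "(\<lambda>n. g n * u ^ n * (if k dvd n then of_nat k else 0)) sums (\<Sum>j<k. G (\<omega> ^ j * u))"
    by simp
  then have "(\<lambda>m. g (m * k) * u ^ (m * k) * of_nat k) sums (\<Sum>j<k. G (\<omega> ^ j * u))"
    using k by (subst (asm) sums_mono_reindex[of "\<lambda>m. m * k", symmetric])
      (auto intro: strict_monoI simp: dvd_def mult.commute)
  from sums_divide[OF this, of "of_nat k"] show ?thesis
    using k by (simp add: mult.commute[of _ k] power_mult)
qed

lemma ex_root_in_unit_ball:
  fixes v :: complex
  assumes k: "k \<ge> 1" and v: "norm v < 1"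
  obtains u where "u ^ k = v" "norm u < 1"
proof -
  define u where "u = (if v = 0 then 0 else exp (Ln v / of_nat k))"
  have uk: "u ^ k = v"
    using k by (simp add: u_def flip: exp_of_nat_mult)
  then have "norm u ^ k < 1"
    using v by (metis norm_power)
  then have "norm u < 1"
    using k by (metis norm_ge_zero one_le_power not_le)
  with uk show ?thesis by (rule that)
qed

lemma has_fps_expansion_of_sums:
  fixes f :: "complex \<Rightarrow> complex"
  assumes "r > 0" "\<And>z. norm z < r \<Longrightarrow> (\<lambda>n. F $ n * z ^ n) sums f z"
  shows "f has_fps_expansion F"
  using assms
  by (intro has_fps_expansionI eventually_nhds_in_open[of "ball 0 r", THEN eventually_mono]) auto

text \<open>Averaging \<open>G\<close> over the \<open>k\<close>-th roots of unity leaves a bounded function of \<open>z\<^sup>k\<close> whose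
  first coefficient is \<open>g k\<close>; Schwarz-Pick at the origin bounds it.\<close>

lemma Wiener_coefficient_bound:
  fixes g :: "nat \<Rightarrow> complex" and G :: "complex \<Rightarrow> complex"
  assumes sums: "\<And>z. norm z < 1 \<Longrightarrow> (\<lambda>n. g n * z ^ n) sums G z"
    and bd: "\<And>z. norm z < 1 \<Longrightarrow> norm (G z) \<le> 1" and k: "k \<ge> 1"
  shows "norm (g k) \<le> 1 - (norm (g 0))\<^sup>2"
proof -
  define \<omega> where "\<omega> = exp (2 * of_real pi * \<i> / of_nat k)"
  define H where "H v = (\<Sum>m. g (m * k) * v ^ m)" for v
  have H: "(\<lambda>m. g (m * k) * v ^ m) sums H v \<and> norm (H v) \<le> 1" if v: "norm v < 1" for v
  proof -
    obtain u where u: "u ^ k = v" "norm u < 1"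
      using ex_root_in_unit_ball[OF k v] .
    have filter: "(\<lambda>m. g (m * k) * v ^ m) sums ((\<Sum>j<k. G (\<omega> ^ j * u)) / of_nat k)"
      using power_series_root_unity_filter[OF sums k u(2)] u(1) by (simp add: \<omega>_def)
    have "norm (\<Sum>j<k. G (\<omega> ^ j * u)) \<le> (\<Sum>j<k. 1)"
      using u(2) norm_root_unity[of k]
      by (intro sum_norm_le bd) (simp add: \<omega>_def norm_mult norm_power)
    then have "norm ((\<Sum>j<k. G (\<omega> ^ j * u)) / of_nat k) \<le> 1"
      using k by (simp add: norm_divide)
    with filter show ?thesis
      by (simp add: H_def sums_iff)
  qed
  have "H holomorphic_on ball 0 1"
    using H by (intro power_series_holomorphic[of 0 1 "\<lambda>m. g (m * k)"]) auto
  moreover have fps: "H has_fps_expansion Abs_fps (\<lambda>m. g (m * k))"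
    using H by (intro has_fps_expansion_of_sums[OF zero_less_one]) auto
  have "deriv H 0 = g k" "H 0 = g 0"
    using fps_nth_fps_expansion[OF fps, of 1] fps_nth_fps_expansion[OF fps, of 0] by auto
  ultimately show ?thesis
    using Schwarz_Pick_deriv_0[of H] H by auto
qed

section \<open>The disc \<open>\<Omega>\<^sub>\<gamma>\<close>\<close>

lemma Omega_iff:
  assumes "\<gamma> < 1"
  shows "z \<in> Omega \<gamma> \<longleftrightarrow> norm (of_real \<gamma> + of_real (1 - \<gamma>) * z) < 1"
proof -
  define w where "w = z + of_real (\<gamma> / (1 - \<gamma>))"
  have "z \<in> Omega \<gamma> \<longleftrightarrow> norm w < 1 / (1 - \<gamma>)"
    by (simp add: Omega_def w_def dist_norm norm_minus_commute add.commute)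
  also have "\<dots> \<longleftrightarrow> (1 - \<gamma>) * norm w < 1"
    using assms by (simp add: less_divide_eq mult.commute)
  also have "(1 - \<gamma>) * norm w = norm (of_real (1 - \<gamma>) * w)"
    using assms by (simp add: norm_mult del: of_real_diff)
  also have "of_real (1 - \<gamma>) * w = of_real \<gamma> + of_real (1 - \<gamma>) * z"
    using assms by (simp add: w_def field_simps)
  finally show ?thesis .
qed

lemma ball_subset_Omega:
  assumes "0 \<le> \<gamma>" "\<gamma> < 1"
  shows "ball 0 1 \<subseteq> Omega \<gamma>"
proof
  fix z :: complex
  assume "z \<in> ball 0 1"
  then have z: "norm z < 1" by simp
  have "norm (of_real \<gamma> + of_real (1 - \<gamma>) * z) \<le> norm (of_real \<gamma> :: complex) + norm (of_real (1 - \<gamma>) * z)"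
    by (rule norm_triangle_ineq)
  also have "\<dots> = \<gamma> + (1 - \<gamma>) * norm z"
    using assms by (simp add: norm_mult del: of_real_diff)
  also have "\<dots> < \<gamma> + (1 - \<gamma>) * 1"
    using assms z by (intro add_strict_left_mono mult_strict_left_mono) auto
  finally show "z \<in> Omega \<gamma>"
    using assms by (simp add: Omega_iff)
qed

lemma one_plus_mult_neq_0:
  fixes w u :: complex
  assumes "norm w \<le> 1" "norm u < 1"
  shows "1 + w * u \<noteq> 0"
proof
  assume "1 + w * u = 0"
  then have "norm (w * u) = 1"
    by (metis add_eq_0_iff norm_minus_cancel norm_one)
  moreover have "norm w * norm u \<le> norm u"
    using assms by (intro mult_left_le_one_le) auto
  then have "norm (w * u) < 1"
    using assms by (simp add: norm_mult)
  ultimately show False by simp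
qed

definition Omega_param :: "real \<Rightarrow> complex \<Rightarrow> complex" where
  "Omega_param \<gamma> u = (1 + of_real \<gamma>) * u / (1 + of_real \<gamma> * u)"

definition Omega_chart :: "real \<Rightarrow> complex \<Rightarrow> complex" where
  "Omega_chart \<gamma> z = z / (1 + of_real \<gamma> - of_real \<gamma> * z)"

lemma Omega_param_in_Omega:
  assumes "0 \<le> \<gamma>" "\<gamma> < 1" "norm u < 1"
  shows "Omega_param \<gamma> u \<in> Omega \<gamma>"
proof -
  have "1 + of_real \<gamma> * u \<noteq> 0"
    using assms by (intro one_plus_mult_neq_0) auto
  then have "of_real \<gamma> + of_real (1 - \<gamma>) * Omega_param \<gamma> u = Moebius_function 0 (- of_real \<gamma>) u"
    by (simp add: Omega_param_def Moebius_function_simple field_simps)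
  moreover have "norm (Moebius_function 0 (- of_real \<gamma>) u) < 1"
    using assms by (intro Moebius_function_norm_lt_1) auto
  ultimately show ?thesis
    using assms by (simp add: Omega_iff)
qed

lemma holomorphic_Omega_param:
  assumes "0 \<le> \<gamma>" "\<gamma> \<le> 1"
  shows "Omega_param \<gamma> holomorphic_on ball 0 1"
  unfolding Omega_param_def[abs_def] using assms
  by (intro holomorphic_intros one_plus_mult_neq_0) auto

lemma norm_lt_Omega_chart_denom:
  fixes z :: complex
  assumes \<gamma>: "0 \<le> \<gamma>" and z: "norm z < 1"
  shows "norm z < norm (1 + of_real \<gamma> - of_real \<gamma> * z)"
proof -
  have "norm (1 + of_real \<gamma> :: complex) - norm (of_real \<gamma> * z) \<le> norm (1 + of_real \<gamma> - of_real \<gamma> * z)"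
    by (rule norm_triangle_ineq2)
  moreover have "norm (1 + of_real \<gamma> :: complex) = 1 + \<gamma>"
    using \<gamma> by (simp add: cmod_eq_Re)
  moreover have "(1 + \<gamma>) * norm z < (1 + \<gamma>) * 1"
    using \<gamma> z by (intro mult_strict_left_mono) auto
  moreover have "norm (of_real \<gamma> * z) = \<gamma> * norm z"
    using \<gamma> by (simp add: norm_mult)
  ultimately show ?thesis
    by (simp add: algebra_simps)
qed

lemma norm_Omega_chart_lt_1:
  assumes "0 \<le> \<gamma>" "norm z < 1"
  shows "norm (Omega_chart \<gamma> z) < 1"
  using norm_lt_Omega_chart_denom[OF assms]
  by (simp add: Omega_chart_def norm_divide divide_less_eq)

lemma Omega_param_Omega_chart:
  assumes \<gamma>: "0 \<le> \<gamma>" and z: "norm z < 1"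
  shows "Omega_param \<gamma> (Omega_chart \<gamma> z) = z"
proof -
  define D where "D = 1 + of_real \<gamma> - of_real \<gamma> * z"
  have D: "D \<noteq> 0"
    using norm_lt_Omega_chart_denom[OF assms] by (auto simp: D_def)
  have "1 + of_real \<gamma> \<noteq> (0 :: complex)"
    using \<gamma> by (simp add: complex_eq_iff)
  moreover have "1 + of_real \<gamma> * (z / D) = (D + of_real \<gamma> * z) / D"
    using D by (simp add: field_simps)
  then have "1 + of_real \<gamma> * (z / D) = (1 + of_real \<gamma>) / D"
    by (simp add: D_def)
  ultimately show ?thesis
    using D by (simp add: Omega_param_def Omega_chart_def D_def[symmetric])
qed

lemma fps_power_nth_nonneg:
  fixes A :: "complex fps"
  assumes "\<And>n. 0 \<le> A $ n"
  shows "0 \<le> (A ^ i) $ n"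
proof (induction i arbitrary: n)
  case 0
  then show ?case by (simp add: less_eq_complex_def)
next
  case (Suc i)
  then show ?case
    by (simp add: fps_mult_nth sum_nonneg mult_nonneg_nonneg assms)
qed

definition Omega_chart_fps :: "real \<Rightarrow> complex fps" where
  "Omega_chart_fps \<gamma> = Abs_fps (\<lambda>n. if n = 0 then 0 else of_real ((\<gamma> / (1 + \<gamma>)) ^ (n - 1) / (1 + \<gamma>)))"

lemma Omega_chart_fps_nth_nonneg:
  assumes "0 \<le> \<gamma>"
  shows "0 \<le> Omega_chart_fps \<gamma> $ n"
  using assms by (simp add: Omega_chart_fps_def less_eq_complex_def)

lemma Omega_chart_fps_nth_0 [simp]: "Omega_chart_fps \<gamma> $ 0 = 0"
  by (simp add: Omega_chart_fps_def)

lemma has_fps_expansion_Omega_chart: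
  assumes \<gamma>: "0 \<le> \<gamma>"
  shows "Omega_chart \<gamma> has_fps_expansion Omega_chart_fps \<gamma>"
proof (rule has_fps_expansion_of_sums[OF zero_less_one])
  fix z :: complex
  assume z: "norm z < 1"
  define c where "c = \<gamma> / (1 + \<gamma>)"
  have c: "0 \<le> c" "c < 1" "(1 + \<gamma>) * c = \<gamma>"
    using \<gamma> by (auto simp: c_def)
  have "norm (of_real c * z) \<le> norm z"
    using c by (simp add: norm_mult mult_left_le_one_le)
  then have cz: "norm (of_real c * z) < 1"
    using z by simp
  then have "1 - of_real c * z \<noteq> 0"
    by auto
  moreover have "of_real (1 + \<gamma>) * (1 - of_real c * z) = 1 + of_real \<gamma> - of_real \<gamma> * z"
  proof -
    have "of_real (1 + \<gamma>) * (1 - of_real c * z) = of_real (1 + \<gamma>) - of_real ((1 + \<gamma>) * c) * z"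
      by (simp only: right_diff_distrib mult_1_right mult.assoc of_real_mult)
    then show ?thesis
      using c(3) by simp
  qed
  ultimately have sum_eq: "z / of_real (1 + \<gamma>) * (1 / (1 - of_real c * z)) = z / (1 + of_real \<gamma> - of_real \<gamma> * z)"
    by (metis divide_divide_eq_left times_divide_eq_right mult_1_right)
  have term_eq: "z / of_real (1 + \<gamma>) * (of_real c * z) ^ m = Omega_chart_fps \<gamma> $ Suc m * z ^ Suc m" for m
    by (simp add: Omega_chart_fps_def c_def power_mult_distrib field_simps)
  have "(\<lambda>m. z / of_real (1 + \<gamma>) * (of_real c * z) ^ m) sums (z / of_real (1 + \<gamma>) * (1 / (1 - of_real c * z)))"
    by (rule sums_mult[OF geometric_sums[OF cz]])
  then have "(\<lambda>m. Omega_chart_fps \<gamma> $ Suc m * z ^ Suc m) sums (z / (1 + of_real \<gamma> - of_real \<gamma> * z))"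
    unfolding term_eq sum_eq .
  then show "(\<lambda>n. Omega_chart_fps \<gamma> $ n * z ^ n) sums Omega_chart \<gamma> z"
    using sums_Suc_iff[of "\<lambda>n. Omega_chart_fps \<gamma> $ n * z ^ n"] by (simp add: Omega_chart_fps_def Omega_chart_def)
qed

lemma has_fps_expansion_geometric:
  "(\<lambda>u::complex. 1 / (1 - u)) has_fps_expansion Abs_fps (\<lambda>_. 1)"
  by (rule has_fps_expansion_of_sums[OF zero_less_one]) (simp add: geometric_sums)

lemma sum_Omega_chart_fps_power_nth:
  assumes \<gamma>: "0 \<le> \<gamma>" and n: "n \<ge> 1"
  shows "(\<Sum>i=0..n. (Omega_chart_fps \<gamma> ^ i) $ n) = of_real (1 / (1 + \<gamma>))"
proof -
  define \<psi> where "\<psi> = Omega_chart \<gamma>"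
  define Q where "Q = Abs_fps (\<lambda>n. if n = 0 then 1 else of_real (1 / (1 + \<gamma>)) :: complex)"
  have "((\<lambda>u. 1 / (1 - u)) \<circ> \<psi>) has_fps_expansion (Abs_fps (\<lambda>_. 1) oo Omega_chart_fps \<gamma>)"
    unfolding \<psi>_def
    by (intro has_fps_expansion_compose has_fps_expansion_geometric has_fps_expansion_Omega_chart \<gamma>) simp
  moreover have "((\<lambda>u. 1 / (1 - u)) \<circ> \<psi>) has_fps_expansion Q"
  proof (rule has_fps_expansion_of_sums[OF zero_less_one])
    fix z :: complex
    assume z: "norm z < 1"
    have D: "1 + of_real \<gamma> - of_real \<gamma> * z \<noteq> 0"
      using norm_lt_Omega_chart_denom[OF \<gamma> z] by auto
    have z1: "1 - z \<noteq> 0" using z by auto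
    have g1: "1 + of_real \<gamma> \<noteq> (0 :: complex)"
      using \<gamma> by (simp add: complex_eq_iff)
    have "1 - \<psi> z = (1 + of_real \<gamma> - of_real \<gamma> * z - z) / (1 + of_real \<gamma> - of_real \<gamma> * z)"
      using D by (simp add: \<psi>_def Omega_chart_def diff_divide_distrib)
    also have "1 + of_real \<gamma> - of_real \<gamma> * z - z = (1 + of_real \<gamma>) * (1 - z)"
      by (simp add: algebra_simps)
    finally have "1 / (1 - \<psi> z) = (1 + of_real \<gamma> - of_real \<gamma> * z) / ((1 + of_real \<gamma>) * (1 - z))"
      by simp
    also have "\<dots> = ((1 + of_real \<gamma>) * (1 - z) + z) / ((1 + of_real \<gamma>) * (1 - z))"
      by (simp add: algebra_simps)
    also have "\<dots> = 1 + z / ((1 + of_real \<gamma>) * (1 - z))"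
      using g1 z1 by (simp add: add_divide_distrib)
    finally have val: "1 / (1 - \<psi> z) = 1 + of_real (1 / (1 + \<gamma>)) * z * (1 / (1 - z))"
      by simp
    have "(\<lambda>m. of_real (1 / (1 + \<gamma>)) * z * z ^ m) sums (of_real (1 / (1 + \<gamma>)) * z * (1 / (1 - z)))"
      by (rule sums_mult[OF geometric_sums[OF z]])
    then have "(\<lambda>m. Q $ Suc m * z ^ Suc m) sums (1 / (1 - \<psi> z) - 1)"
      by (simp add: val Q_def mult_ac)
    then show "(\<lambda>n. Q $ n * z ^ n) sums ((\<lambda>u. 1 / (1 - u)) \<circ> \<psi>) z"
      using sums_Suc_iff[of "\<lambda>n. Q $ n * z ^ n"] by (simp add: Q_def o_def)
  qed
  ultimately have "Abs_fps (\<lambda>_. 1) oo Omega_chart_fps \<gamma> = Q"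
    by (rule fps_expansion_unique_complex)
  then have "(Abs_fps (\<lambda>_. 1) oo Omega_chart_fps \<gamma>) $ n = Q $ n"
    by simp
  then show ?thesis
    using n by (simp add: fps_compose_nth Q_def)
qed

lemma norm_fps_compose_nth_le:
  fixes g A :: "complex fps"
  assumes g: "\<And>i. i \<ge> 1 \<Longrightarrow> norm (g $ i) \<le> M"
    and A: "\<And>k. 0 \<le> A $ k" "A $ 0 = 0" and n: "n \<ge> 1"
  shows "norm ((g oo A) $ n) \<le> M * Re (\<Sum>i=0..n. (A ^ i) $ n)"
proof -
  have "norm ((g oo A) $ n) \<le> (\<Sum>i=0..n. norm (g $ i * (A ^ i) $ n))"
    unfolding fps_compose_nth by (rule norm_sum)
  also have "\<dots> \<le> (\<Sum>i=0..n. M * Re ((A ^ i) $ n))"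
  proof (rule sum_mono)
    fix i
    have "0 \<le> (A ^ i) $ n"
      by (rule fps_power_nth_nonneg[OF A(1)])
    then have "norm ((A ^ i) $ n) = Re ((A ^ i) $ n)"
      by (simp add: less_eq_complex_def cmod_eq_Re)
    moreover have "norm (g $ i * (A ^ i) $ n) \<le> M * norm ((A ^ i) $ n)"
    proof (cases "i = 0")
      case True
      then show ?thesis using n by simp
    next
      case False
      then show ?thesis
        using g[of i] by (simp add: norm_mult mult_right_mono)
    qed
    ultimately show "norm (g $ i * (A ^ i) $ n) \<le> M * Re ((A ^ i) $ n)"
      by simp
  qed
  also have "\<dots> = M * Re (\<Sum>i=0..n. (A ^ i) $ n)"
    by (simp add: sum_distrib_left Re_sum)
  finally show ?thesis .
qed

lemma Omega_coeffs_eq_compose: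
  fixes f :: "complex \<Rightarrow> complex" and s :: "nat \<Rightarrow> complex"
  assumes \<gamma>: "0 \<le> \<gamma>"
    and ser: "\<And>z. norm z < 1 \<Longrightarrow> (\<lambda>n. s n * z ^ n) sums f z"
    and G: "G has_fps_expansion g" and param: "\<And>u. norm u < 1 \<Longrightarrow> G u = f (Omega_param \<gamma> u)"
  shows "Abs_fps s = g oo Omega_chart_fps \<gamma>"
proof -
  have "(G \<circ> Omega_chart \<gamma>) has_fps_expansion (g oo Omega_chart_fps \<gamma>)"
    using \<gamma> by (intro has_fps_expansion_compose G has_fps_expansion_Omega_chart) auto
  moreover have "eventually (\<lambda>z. (G \<circ> Omega_chart \<gamma>) z = f z) (nhds 0)"
    using \<gamma> by (intro eventually_nhds_in_open[of "ball 0 1", THEN eventually_mono])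
      (auto simp: param norm_Omega_chart_lt_1 Omega_param_Omega_chart)
  ultimately have "f has_fps_expansion (g oo Omega_chart_fps \<gamma>)"
    using has_fps_expansion_cong by blast
  moreover have "f has_fps_expansion Abs_fps s"
    using ser by (intro has_fps_expansion_of_sums[OF zero_less_one]) auto
  ultimately show ?thesis
    using fps_expansion_unique_complex by blast
qed

lemma Omega_coeff_bound:
  fixes f :: "complex \<Rightarrow> complex" and s :: "nat \<Rightarrow> complex"
  assumes \<gamma>: "0 \<le> \<gamma>" "\<gamma> < 1"
    and hol: "f holomorphic_on Omega \<gamma>" and bd: "\<And>z. z \<in> Omega \<gamma> \<Longrightarrow> norm (f z) \<le> 1"
    and ser: "\<And>z. norm z < 1 \<Longrightarrow> (\<lambda>n. s n * z ^ n) sums f z" and n: "n \<ge> 1"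
  shows "norm (s n) \<le> (1 - (norm (s 0))\<^sup>2) / (1 + \<gamma>)"
proof -
  define G where "G = (\<lambda>u. f (Omega_param \<gamma> u))"
  define g where "g = fps_expansion G 0"
  have param: "Omega_param \<gamma> u \<in> Omega \<gamma>" if "norm u < 1" for u
    using \<gamma> that by (rule Omega_param_in_Omega)
  then have "Omega_param \<gamma> ` ball 0 1 \<subseteq> Omega \<gamma>"
    by auto
  then have "G holomorphic_on ball 0 1"
    using holomorphic_on_compose_gen[OF holomorphic_Omega_param hol] \<gamma>
    by (simp add: G_def o_def)
  then have g_sums: "(\<lambda>i. g $ i * u ^ i) sums G u" if "norm u < 1" for u
    using holomorphic_power_series[of G 0 1 u] that by (simp add: g_def fps_expansion_def)
  have "s 0 = f 0"
    using ser[of 0] by (simp add: powser_sums_zero_iff)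
  then have g0: "g $ 0 = s 0"
    using g_sums[of 0] by (simp add: powser_sums_zero_iff G_def Omega_param_def)
  have Wiener: "norm (g $ i) \<le> 1 - (norm (s 0))\<^sup>2" if "i \<ge> 1" for i
    using Wiener_coefficient_bound[OF g_sums _ that] bd param g0 by (simp add: G_def)
  have "G has_fps_expansion g"
    using has_fps_expansion_of_sums[OF zero_less_one g_sums] .
  from Omega_coeffs_eq_compose[OF \<gamma>(1) ser this]
  have "Abs_fps s = g oo Omega_chart_fps \<gamma>"
    by (simp add: G_def)
  then have "s n = (g oo Omega_chart_fps \<gamma>) $ n"
    by (metis fps_nth_Abs_fps)
  moreover have "norm ((g oo Omega_chart_fps \<gamma>) $ n)
      \<le> (1 - (norm (s 0))\<^sup>2) * Re (\<Sum>i=0..n. (Omega_chart_fps \<gamma> ^ i) $ n)"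
    using Wiener \<gamma> n by (intro norm_fps_compose_nth_le Omega_chart_fps_nth_nonneg) auto
  ultimately show ?thesis
    using \<gamma> n by (simp add: sum_Omega_chart_fps_power_nth)
qed

section \<open>The Bohr-type inequality and its sharpness\<close>

lemma Bohr_inequality_Omega:
  fixes f :: "complex \<Rightarrow> complex" and s :: "nat \<Rightarrow> complex" and d :: "nat \<Rightarrow> real"
  assumes \<gamma>: "0 \<le> \<gamma>" "\<gamma> < 1" and p: "0 < p" "p \<le> 2"
    and d: "\<And>n. 0 \<le> d n" and sR: "summable (\<lambda>n. d n * R ^ Suc n)"
    and dR: "(\<Sum>n. d n * R ^ Suc n) \<le> (1 + \<gamma>) * p / 2"
    and hol: "f holomorphic_on Omega \<gamma>" and bd: "\<And>z. z \<in> Omega \<gamma> \<Longrightarrow> norm (f z) \<le> 1"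
    and ser: "\<And>z. norm z < 1 \<Longrightarrow> (\<lambda>n. s n * z ^ n) sums f z"
    and r: "0 \<le> r" "r \<le> R"
  shows "norm (s 0) powr p + (\<Sum>n. d n * norm (s (Suc n)) * r ^ Suc n) \<le> 1"
proof -
  define M where "M = (1 - (norm (s 0))\<^sup>2) / (1 + \<gamma>)"
  have "s 0 = f 0"
    using ser[of 0] by (simp add: powser_sums_zero_iff)
  then have s0: "norm (s 0) \<le> 1"
    using bd ball_subset_Omega[OF \<gamma>] by (metis centre_in_ball zero_less_one subsetD)
  then have M: "0 \<le> M"
    using \<gamma> by (simp add: M_def abs_square_le_1)
  have sr: "summable (\<lambda>n. d n * r ^ Suc n)"
    using summable_nonneg_powser_le[OF d sR r] .
  have term_le: "d n * norm (s (Suc n)) * r ^ Suc n \<le> M * (d n * r ^ Suc n)" for n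
  proof -
    have "norm (s (Suc n)) \<le> M"
      using Omega_coeff_bound[OF \<gamma> hol bd ser, of "Suc n"] by (simp add: M_def)
    then have "(d n * r ^ Suc n) * norm (s (Suc n)) \<le> (d n * r ^ Suc n) * M"
      using d[of n] r by (intro mult_left_mono) auto
    then show ?thesis
      by (simp add: mult_ac)
  qed
  have "(\<Sum>n. d n * norm (s (Suc n)) * r ^ Suc n) \<le> (\<Sum>n. M * (d n * r ^ Suc n))"
  proof (rule suminf_le[OF term_le])
    show "summable (\<lambda>n. M * (d n * r ^ Suc n))"
      using sr by (rule summable_mult)
    then show "summable (\<lambda>n. d n * norm (s (Suc n)) * r ^ Suc n)"
    proof (rule summable_comparison_test')
      fix n
      show "norm (d n * norm (s (Suc n)) * r ^ Suc n) \<le> M * (d n * r ^ Suc n)"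
        using term_le[of n] d[of n] r by (simp add: abs_mult)
    qed
  qed
  also have "\<dots> = M * (\<Sum>n. d n * r ^ Suc n)"
    using sr by (rule suminf_mult)
  also have "\<dots> \<le> M * (\<Sum>n. d n * R ^ Suc n)"
    using M by (intro mult_left_mono suminf_nonneg_powser_mono[OF d sR r])
  also have "\<dots> \<le> M * ((1 + \<gamma>) * p / 2)"
    using dR M by (rule mult_left_mono)
  also have "\<dots> = (1 - (norm (s 0))\<^sup>2) * p / 2"
    using \<gamma> by (simp add: M_def)
  finally show ?thesis
    using powr_plus_le_1[OF norm_ge_zero s0 p] by linarith
qed

text \<open>In the notation of the paper, \<open>(\<alpha> - w) / (1 - \<alpha> w)\<close> with \<open>w = \<gamma> + (1 - \<gamma>) z\<close>.\<close>

definition extremal_fun :: "real \<Rightarrow> real \<Rightarrow> complex \<Rightarrow> complex" where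
  "extremal_fun \<gamma> \<alpha> z = - Moebius_function 0 (of_real \<alpha>) (of_real \<gamma> + of_real (1 - \<gamma>) * z)"

definition extremal_coeff :: "real \<Rightarrow> real \<Rightarrow> nat \<Rightarrow> real" where
  "extremal_coeff \<gamma> \<alpha> n = (if n = 0 then (\<alpha> - \<gamma>) / (1 - \<alpha> * \<gamma>)
     else - ((1 - \<alpha>\<^sup>2) / (\<alpha> * (1 - \<alpha> * \<gamma>)) * (\<alpha> * (1 - \<gamma>) / (1 - \<alpha> * \<gamma>)) ^ n))"

lemma extremal_fun_holomorphic:
  assumes "\<gamma> < 1" "\<bar>\<alpha>\<bar> < 1"
  shows "extremal_fun \<gamma> \<alpha> holomorphic_on Omega \<gamma>"
proof -
  have "Moebius_function 0 (of_real \<alpha>) holomorphic_on ball 0 1"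
    using assms by (intro Moebius_function_holomorphic) simp
  moreover have "(\<lambda>z. of_real \<gamma> + of_real (1 - \<gamma>) * z) ` Omega \<gamma> \<subseteq> ball 0 1"
    using assms by (auto simp: Omega_iff)
  ultimately have "(Moebius_function 0 (of_real \<alpha>) \<circ> (\<lambda>z. of_real \<gamma> + of_real (1 - \<gamma>) * z))
      holomorphic_on Omega \<gamma>"
    by (intro holomorphic_on_compose_gen holomorphic_intros)
  then show ?thesis
    unfolding extremal_fun_def[abs_def] by (intro holomorphic_intros) (simp add: o_def)
qed

lemma norm_extremal_fun_le_1:
  assumes "\<gamma> < 1" "\<bar>\<alpha>\<bar> < 1" "z \<in> Omega \<gamma>"
  shows "norm (extremal_fun \<gamma> \<alpha> z) \<le> 1"
  using Moebius_function_norm_lt_1[of "of_real \<alpha>" "of_real \<gamma> + of_real (1 - \<gamma>) * z" 0] assms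
  by (simp add: extremal_fun_def Omega_iff)

lemma extremal_fun_sums:
  assumes \<gamma>: "0 \<le> \<gamma>" and \<alpha>: "\<gamma> < \<alpha>" "\<alpha> < 1" and z: "norm z < 1"
  shows "(\<lambda>n. of_real (extremal_coeff \<gamma> \<alpha> n) * z ^ n) sums extremal_fun \<gamma> \<alpha> z"
proof -
  define A :: complex where "A = of_real \<alpha>"
  define C :: complex where "C = of_real \<gamma>"
  define K where "K = (1 - \<alpha>\<^sup>2) / (\<alpha> * (1 - \<alpha> * \<gamma>))"
  define q where "q = \<alpha> * (1 - \<gamma>) / (1 - \<alpha> * \<gamma>)"
  have "\<alpha> * \<gamma> < 1"
    using \<gamma> \<alpha> by (metis le_less_trans less_le_trans mult_le_cancel_left1 less_eq_real_def
        mult_less_cancel_right1 not_less)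
  then have q: "0 \<le> q" "q < 1"
    using \<gamma> \<alpha> by (auto simp: q_def field_simps)
  have qz: "norm (of_real q * z) < 1"
    using q z by (simp add: norm_mult) (metis abs_of_nonneg le_less_trans mult_left_le_one_le norm_ge_zero less_imp_le)
  define w where "w = C + (1 - C) * z"
  have "norm w < 1"
    using ball_subset_Omega[of \<gamma>] \<gamma> \<alpha> z by (auto simp: w_def C_def Omega_iff)
  then have den: "1 - A * w \<noteq> 0"
    using one_plus_mult_neq_0[of "- A" w] \<alpha> \<gamma> by (simp add: A_def)
  have A0: "A \<noteq> 0" and AC: "1 - A * C \<noteq> 0"
    using \<gamma> \<alpha> \<open>\<alpha> * \<gamma> < 1\<close> by (auto simp: A_def C_def complex_eq_iff)
  have qz1: "1 - of_real q * z \<noteq> 0"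
    using qz by auto
  have partial_fractions: "(A - w) / (1 - A * w) = 1 / A - (1 - A\<^sup>2) / (A * (1 - A * w))"
    using A0 den by (simp add: field_simps power2_eq_square)
  have factor: "1 - A * w = (1 - A * C) * (1 - of_real q * z)"
    using AC by (simp add: w_def q_def A_def C_def field_simps)
  have "(1 - A\<^sup>2) / (A * ((1 - A * C) * (1 - of_real q * z))) = of_real K * (1 / (1 - of_real q * z))"
    by (simp add: K_def A_def C_def)
  then have "(A - w) / (1 - A * w) = 1 / A - of_real K * (1 / (1 - of_real q * z))"
    using partial_fractions unfolding factor by simp
  then have val: "extremal_fun \<gamma> \<alpha> z = 1 / A - of_real K * (1 / (1 - of_real q * z))"
    by (simp add: extremal_fun_def Moebius_function_simple A_def C_def w_def minus_divide_left)
  have "(\<lambda>n. (if n = 0 then 1 / A else 0) - of_real K * (of_real q * z) ^ n)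
      sums (1 / A - of_real K * (1 / (1 - of_real q * z)))"
    by (intro sums_diff sums_mult geometric_sums qz) (use sums_single[of 0 "\<lambda>_. 1 / A"] in simp)
  moreover have "(if n = 0 then 1 / A else 0) - of_real K * (of_real q * z) ^ n
      = of_real (extremal_coeff \<gamma> \<alpha> n) * z ^ n" for n
  proof -
    have "1 / \<alpha> - K = (\<alpha> - \<gamma>) / (1 - \<alpha> * \<gamma>)"
      using \<alpha> \<gamma> \<open>\<alpha> * \<gamma> < 1\<close> by (simp add: K_def field_simps power2_eq_square)
    then have "extremal_coeff \<gamma> \<alpha> n = (if n = 0 then 1 / \<alpha> - K else - K * q ^ n)"
      by (simp add: extremal_coeff_def K_def q_def)
    then show ?thesis
      by (simp add: A_def power_mult_distrib)
  qed
  ultimately show ?thesis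
    by (simp add: val)
qed

lemma extremal_param_bounds:
  fixes \<gamma> \<alpha> :: real
  assumes "0 \<le> \<gamma>" "\<gamma> < \<alpha>" "\<alpha> < 1"
  shows "0 < (\<alpha> - \<gamma>) / (1 - \<alpha> * \<gamma>)" "(\<alpha> - \<gamma>) / (1 - \<alpha> * \<gamma>) \<le> 1"
    and "0 < (1 - \<alpha>\<^sup>2) / (\<alpha> * (1 - \<alpha> * \<gamma>))"
    and "0 < \<alpha> * (1 - \<gamma>) / (1 - \<alpha> * \<gamma>)" "\<alpha> * (1 - \<gamma>) / (1 - \<alpha> * \<gamma>) < 1"
proof -
  have "\<alpha> * \<gamma> < 1 * 1" "\<alpha> * \<alpha> < 1 * 1"
    using assms by (intro mult_strict_mono'; simp)+
  moreover have "0 \<le> (1 - \<alpha>) * (1 + \<gamma>)"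
    using assms by simp
  ultimately show "0 < (\<alpha> - \<gamma>) / (1 - \<alpha> * \<gamma>)" "(\<alpha> - \<gamma>) / (1 - \<alpha> * \<gamma>) \<le> 1"
    and "0 < (1 - \<alpha>\<^sup>2) / (\<alpha> * (1 - \<alpha> * \<gamma>))"
    and "0 < \<alpha> * (1 - \<gamma>) / (1 - \<alpha> * \<gamma>)" "\<alpha> * (1 - \<gamma>) / (1 - \<alpha> * \<gamma>) < 1"
    using assms by (auto simp: field_simps power2_eq_square)
qed

lemma extremal_weight_identity:
  fixes \<gamma> \<alpha> :: real
  assumes "0 \<le> \<gamma>" "\<gamma> < \<alpha>" "\<alpha> < 1"
  defines "t \<equiv> (\<alpha> - \<gamma>) / (1 - \<alpha> * \<gamma>)"
  shows "(1 - \<alpha>\<^sup>2) / (\<alpha> * (1 - \<alpha> * \<gamma>)) * ((1 - \<gamma>\<^sup>2) * \<alpha> * (1 - \<alpha> * \<gamma>) / (\<alpha> - \<gamma>)\<^sup>2)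
    = (1 - t\<^sup>2) / t\<^sup>2"
proof -
  have "\<alpha> * \<gamma> < 1 * 1"
    using assms by (intro mult_strict_mono') auto
  then have nz: "\<alpha> \<noteq> 0" "1 - \<alpha> * \<gamma> \<noteq> 0" "\<alpha> - \<gamma> \<noteq> 0"
    using assms by auto
  have "(1 - t\<^sup>2) / t\<^sup>2 = ((1 - \<alpha> * \<gamma>)\<^sup>2 - (\<alpha> - \<gamma>)\<^sup>2) / (\<alpha> - \<gamma>)\<^sup>2"
    using nz by (simp add: t_def field_simps)
  also have "(1 - \<alpha> * \<gamma>)\<^sup>2 - (\<alpha> - \<gamma>)\<^sup>2 = (1 - \<alpha>\<^sup>2) * (1 - \<gamma>\<^sup>2)"
    by (simp add: power2_eq_square algebra_simps)
  finally have "(1 - t\<^sup>2) / t\<^sup>2 = (1 - \<alpha>\<^sup>2) * (1 - \<gamma>\<^sup>2) / (\<alpha> - \<gamma>)\<^sup>2" .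
  moreover have "(1 - \<alpha>\<^sup>2) / (\<alpha> * (1 - \<alpha> * \<gamma>)) * ((1 - \<gamma>\<^sup>2) * \<alpha> * (1 - \<alpha> * \<gamma>) / (\<alpha> - \<gamma>)\<^sup>2)
      = (1 - \<alpha>\<^sup>2) * (1 - \<gamma>\<^sup>2) / (\<alpha> - \<gamma>)\<^sup>2"
    using nz by (simp add: field_simps)
  ultimately show ?thesis
    by simp
qed

lemma exists_extremal_parameter:
  fixes \<gamma> r r' B :: real
  assumes \<gamma>: "0 \<le> \<gamma>" "\<gamma> < 1" and r: "r' < r" and B: "1 + \<gamma> < B"
  shows "\<exists>\<alpha>. \<gamma> < \<alpha> \<and> \<alpha> < 1 \<and> r' < \<alpha> * (1 - \<gamma>) / (1 - \<alpha> * \<gamma>) * r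
           \<and> (1 - \<gamma>\<^sup>2) * \<alpha> * (1 - \<alpha> * \<gamma>) / (\<alpha> - \<gamma>)\<^sup>2 < B"
proof -
  have \<gamma>1: "1 - \<gamma> \<noteq> 0" using \<gamma> by simp
  have "((\<lambda>\<alpha>. \<alpha> * (1 - \<gamma>) / (1 - \<alpha> * \<gamma>) * r) \<longlongrightarrow> 1 * (1 - \<gamma>) / (1 - 1 * \<gamma>) * r) (at_left 1)"
    using \<gamma>1 by (intro tendsto_intros) auto
  moreover have "1 * (1 - \<gamma>) / (1 - 1 * \<gamma>) * r = r"
    using \<gamma>1 by simp
  ultimately have ev_r: "eventually (\<lambda>\<alpha>. r' < \<alpha> * (1 - \<gamma>) / (1 - \<alpha> * \<gamma>) * r) (at_left 1)"
    using r by (intro order_tendstoD(1)) auto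
  have "((\<lambda>\<alpha>. (1 - \<gamma>\<^sup>2) * \<alpha> * (1 - \<alpha> * \<gamma>) / (\<alpha> - \<gamma>)\<^sup>2)
      \<longlongrightarrow> (1 - \<gamma>\<^sup>2) * 1 * (1 - 1 * \<gamma>) / (1 - \<gamma>)\<^sup>2) (at_left 1)"
    using \<gamma>1 by (intro tendsto_intros) auto
  moreover have "(1 - \<gamma>\<^sup>2) * 1 * (1 - 1 * \<gamma>) = (1 + \<gamma>) * (1 - \<gamma>)\<^sup>2"
    by (simp add: power2_eq_square algebra_simps)
  then have "(1 - \<gamma>\<^sup>2) * 1 * (1 - 1 * \<gamma>) / (1 - \<gamma>)\<^sup>2 = 1 + \<gamma>"
    using \<gamma>1 by simp
  ultimately have ev_B: "eventually (\<lambda>\<alpha>. (1 - \<gamma>\<^sup>2) * \<alpha> * (1 - \<alpha> * \<gamma>) / (\<alpha> - \<gamma>)\<^sup>2 < B) (at_left 1)"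
    using B by (intro order_tendstoD(2)) auto
  have ev_\<alpha>: "eventually (\<lambda>\<alpha>. \<alpha> \<in> {\<gamma><..<1}) (at_left (1::real))"
    using \<gamma> by (intro eventually_at_left_real)
  have "eventually (\<lambda>\<alpha>. \<gamma> < \<alpha> \<and> \<alpha> < 1 \<and> r' < \<alpha> * (1 - \<gamma>) / (1 - \<alpha> * \<gamma>) * r
      \<and> (1 - \<gamma>\<^sup>2) * \<alpha> * (1 - \<alpha> * \<gamma>) / (\<alpha> - \<gamma>)\<^sup>2 < B) (at_left 1)"
    using ev_r ev_B ev_\<alpha> by eventually_elim auto
  from eventually_happens[OF this] show ?thesis
    by (simp add: trivial_limit_at_left_real)
qed

lemma extremal_Bohr_sum_gt_1:
  fixes d :: "nat \<Rightarrow> real"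
  assumes \<gamma>: "0 \<le> \<gamma>" and \<alpha>: "\<gamma> < \<alpha>" "\<alpha> < 1" and p: "0 < p" "p \<le> 2"
    and d: "\<And>n. 0 \<le> d n" and sr: "summable (\<lambda>n. d n * r ^ Suc n)" and r: "0 \<le> r"
    and large: "p / 2 * ((1 - \<gamma>\<^sup>2) * \<alpha> * (1 - \<alpha> * \<gamma>) / (\<alpha> - \<gamma>)\<^sup>2)
      < (\<Sum>n. d n * (\<alpha> * (1 - \<gamma>) / (1 - \<alpha> * \<gamma>) * r) ^ Suc n)"
  shows "1 < \<bar>extremal_coeff \<gamma> \<alpha> 0\<bar> powr p + (\<Sum>n. d n * \<bar>extremal_coeff \<gamma> \<alpha> (Suc n)\<bar> * r ^ Suc n)"
proof -
  define t where "t = (\<alpha> - \<gamma>) / (1 - \<alpha> * \<gamma>)"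
  define K where "K = (1 - \<alpha>\<^sup>2) / (\<alpha> * (1 - \<alpha> * \<gamma>))"
  define q where "q = \<alpha> * (1 - \<gamma>) / (1 - \<alpha> * \<gamma>)"
  have t: "0 < t" "t \<le> 1" and K: "0 < K" and q: "0 < q" "q < 1"
    using extremal_param_bounds[OF \<gamma> \<alpha>] by (simp_all add: t_def K_def q_def)
  have "0 \<le> q * r" "q * r \<le> r"
    using q r by (auto simp: mult_left_le_one_le)
  then have sqr: "summable (\<lambda>n. d n * (q * r) ^ Suc n)"
    by (rule summable_nonneg_powser_le[OF d sr])
  have "extremal_coeff \<gamma> \<alpha> (Suc n) = - (K * q ^ Suc n)" for n
    by (simp add: extremal_coeff_def K_def q_def)
  then have "\<bar>extremal_coeff \<gamma> \<alpha> (Suc n)\<bar> = K * q ^ Suc n" for n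
    using K q by simp
  then have "(\<Sum>n. d n * \<bar>extremal_coeff \<gamma> \<alpha> (Suc n)\<bar> * r ^ Suc n) = (\<Sum>n. K * (d n * (q * r) ^ Suc n))"
    by (simp add: power_mult_distrib mult_ac)
  also have "\<dots> = K * (\<Sum>n. d n * (q * r) ^ Suc n)"
    by (rule suminf_mult[OF sqr])
  finally have sum_eq: "(\<Sum>n. d n * \<bar>extremal_coeff \<gamma> \<alpha> (Suc n)\<bar> * r ^ Suc n)
      = K * (\<Sum>n. d n * (q * r) ^ Suc n)" .
  have "1 - t powr p \<le> p / 2 * ((1 - t\<^sup>2) / t\<^sup>2)"
    using one_minus_powr_le[OF t p] by simp
  also have "\<dots> = K * (p / 2 * ((1 - \<gamma>\<^sup>2) * \<alpha> * (1 - \<alpha> * \<gamma>) / (\<alpha> - \<gamma>)\<^sup>2))"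
    using extremal_weight_identity[OF \<gamma> \<alpha>] by (simp only: t_def K_def mult.left_commute)
  also have "\<dots> < K * (\<Sum>n. d n * (q * r) ^ Suc n)"
    unfolding q_def using large K by (rule mult_strict_left_mono)
  finally have "1 < t powr p + K * (\<Sum>n. d n * (q * r) ^ Suc n)"
    by simp
  moreover have "extremal_coeff \<gamma> \<alpha> 0 = t"
    by (simp add: extremal_coeff_def t_def)
  ultimately show ?thesis
    using t unfolding sum_eq by simp
qed

lemma Bohr_inequality_Omega_sharp:
  fixes d :: "nat \<Rightarrow> real"
  assumes \<gamma>: "0 \<le> \<gamma>" "\<gamma> < 1" and p: "0 < p" "p \<le> 2"
    and d: "\<And>n. 0 \<le> d n" and sr: "summable (\<lambda>n. d n * r ^ Suc n)"
    and R: "0 \<le> R" "R < r" "r < 1" and dR: "(1 + \<gamma>) * p / 2 \<le> (\<Sum>n. d n * R ^ Suc n)"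
  shows "\<exists>f s. f holomorphic_on Omega \<gamma> \<and> (\<forall>z\<in>Omega \<gamma>. norm (f z) \<le> 1) \<and>
           (\<forall>z\<in>ball 0 1. (\<lambda>n. s n * z ^ n) sums f z) \<and>
           1 < norm (s 0) powr p + (\<Sum>n. d n * norm (s (Suc n)) * r ^ Suc n)"
proof -
  define H where "H x = (\<Sum>n. d n * x ^ Suc n)" for x
  define r' where "r' = (R + r) / 2"
  have r': "R < r'" "r' < r"
    using R by (auto simp: r'_def)
  have "0 < (1 + \<gamma>) * p / 2"
    using \<gamma> p by simp
  also have "\<dots> \<le> H R"
    using dR by (simp add: H_def)
  finally have "H R < H r'"
    unfolding H_def using R r'
    by (intro suminf_nonneg_powser_strict_mono[OF d summable_nonneg_powser_le[OF d sr]]) auto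
  then have "1 + \<gamma> < H r' / (p / 2)"
    using dR p by (simp add: H_def field_simps)
  then obtain \<alpha> where \<alpha>: "\<gamma> < \<alpha>" "\<alpha> < 1" and qr: "r' < \<alpha> * (1 - \<gamma>) / (1 - \<alpha> * \<gamma>) * r"
    and L: "(1 - \<gamma>\<^sup>2) * \<alpha> * (1 - \<alpha> * \<gamma>) / (\<alpha> - \<gamma>)\<^sup>2 < H r' / (p / 2)"
    using exists_extremal_parameter[OF \<gamma> r'(2)] by blast
  define q where "q = \<alpha> * (1 - \<gamma>) / (1 - \<alpha> * \<gamma>)"
  have "0 < q" "q < 1"
    unfolding q_def using extremal_param_bounds[OF \<gamma>(1) \<alpha>] by simp_all
  then have "0 \<le> q * r" "q * r \<le> r"
    using R by (auto simp: mult_left_le_one_le)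
  then have Hqr: "H r' \<le> H (q * r)"
    unfolding H_def using R r' qr[folded q_def]
    by (intro suminf_nonneg_powser_mono[OF d summable_nonneg_powser_le[OF d sr]]) auto
  have "p / 2 * ((1 - \<gamma>\<^sup>2) * \<alpha> * (1 - \<alpha> * \<gamma>) / (\<alpha> - \<gamma>)\<^sup>2) < p / 2 * (H r' / (p / 2))"
    using L p by (intro mult_strict_left_mono) auto
  also have "\<dots> \<le> H (q * r)"
    using Hqr p by simp
  finally have "p / 2 * ((1 - \<gamma>\<^sup>2) * \<alpha> * (1 - \<alpha> * \<gamma>) / (\<alpha> - \<gamma>)\<^sup>2) < H (q * r)" .
  then have "1 < \<bar>extremal_coeff \<gamma> \<alpha> 0\<bar> powr p + (\<Sum>n. d n * \<bar>extremal_coeff \<gamma> \<alpha> (Suc n)\<bar> * r ^ Suc n)"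
    using R by (intro extremal_Bohr_sum_gt_1[OF \<gamma>(1) \<alpha> p d sr]) (auto simp: H_def q_def)
  moreover have "\<bar>\<alpha>\<bar> < 1"
    using \<gamma> \<alpha> by simp
  then have "extremal_fun \<gamma> \<alpha> holomorphic_on Omega \<gamma>" "\<forall>z\<in>Omega \<gamma>. norm (extremal_fun \<gamma> \<alpha> z) \<le> 1"
    using \<gamma> by (simp_all add: extremal_fun_holomorphic norm_extremal_fun_le_1)
  moreover have "\<forall>z\<in>ball 0 1. (\<lambda>n. of_real (extremal_coeff \<gamma> \<alpha> n) * z ^ n) sums extremal_fun \<gamma> \<alpha> z"
    using extremal_fun_sums[OF \<gamma>(1) \<alpha>] by simp
  ultimately show ?thesis
    by (intro exI[of _ "extremal_fun \<gamma> \<alpha>"] exI[of _ "\<lambda>n. of_real (extremal_coeff \<gamma> \<alpha> n)"]) simp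
qed

theorem theorem3p1:
  fixes \<gamma> p a b c R :: real
  assumes h\<gamma>: "0 \<le> \<gamma>" "\<gamma> < 1"
    and hp: "0 < p" "p \<le> 2"
    and habc: "a > -1" "b > -1" "c > -1"
    and hdef: "\<forall>n::nat. c \<noteq> - real n"
    and hsign: "(\<forall>n\<ge>1. hyp_coeff a b c n \<ge> 0) \<or> (\<forall>n\<ge>1. hyp_coeff a b c n \<le> 0)"
    and hR: "0 < R" "R < 1" "\<bar>hyp2F1 a b c R - 1\<bar> = (1 + \<gamma>) * p / 2"
    and hRmin: "\<forall>x. 0 < x \<and> x < R \<longrightarrow> \<bar>hyp2F1 a b c x - 1\<bar> \<noteq> (1 + \<gamma>) * p / 2"
  shows "(\<forall>(f :: complex \<Rightarrow> complex) (s :: nat \<Rightarrow> complex).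
            f holomorphic_on Omega \<gamma> \<longrightarrow> (\<forall>z\<in>Omega \<gamma>. norm (f z) \<le> 1) \<longrightarrow>
            (\<forall>z\<in>ball 0 1. (\<lambda>n. s n * z ^ n) sums f z) \<longrightarrow>
            (\<forall>r. 0 \<le> r \<and> r \<le> R \<longrightarrow>
               norm (s 0) powr p + (\<Sum>n. \<bar>hyp_coeff a b c (Suc n)\<bar> * norm (s (Suc n)) * r ^ Suc n) \<le> 1))
      \<and> (\<forall>r. R < r \<and> r < 1 \<longrightarrow>
           (\<exists>(f :: complex \<Rightarrow> complex) (s :: nat \<Rightarrow> complex).
              f holomorphic_on Omega \<gamma> \<and> (\<forall>z\<in>Omega \<gamma>. norm (f z) \<le> 1) \<and>
              (\<forall>z\<in>ball 0 1. (\<lambda>n. s n * z ^ n) sums f z) \<and>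
              norm (s 0) powr p + (\<Sum>n. \<bar>hyp_coeff a b c (Suc n)\<bar> * norm (s (Suc n)) * r ^ Suc n) > 1))"
proof -
  define d where "d n = \<bar>hyp_coeff a b c (Suc n)\<bar>" for n
  have d: "0 \<le> d n" for n
    by (simp add: d_def)
  have summable: "summable (\<lambda>n. d n * x ^ Suc n)" if "0 \<le> x" "x < 1" for x
    using summable_abs_hyp_coeff[OF hdef that] summable_Suc_iff[of "\<lambda>n. \<bar>hyp_coeff a b c n\<bar> * x ^ n"]
    by (simp add: d_def)
  have dR: "(\<Sum>n. d n * R ^ Suc n) = (1 + \<gamma>) * p / 2"
    using abs_hyp2F1_minus_1[OF hdef hsign, of R] hR by (simp add: d_def)
  show ?thesis
    unfolding d_def[symmetric]
  proof (intro conjI allI impI)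
    fix f s r
    assume "f holomorphic_on Omega \<gamma>" "\<forall>z\<in>Omega \<gamma>. norm (f z) \<le> 1"
      "\<forall>z\<in>ball 0 1. (\<lambda>n. s n * z ^ n) sums f z" "0 \<le> r \<and> r \<le> R"
    then show "norm (s 0) powr p + (\<Sum>n. d n * norm (s (Suc n)) * r ^ Suc n) \<le> 1"
      using hR dR by (intro Bohr_inequality_Omega[OF h\<gamma> hp d summable]) auto
  next
    fix r
    assume "R < r \<and> r < 1"
    then show "\<exists>f s. f holomorphic_on Omega \<gamma> \<and> (\<forall>z\<in>Omega \<gamma>. norm (f z) \<le> 1) \<and>
        (\<forall>z\<in>ball 0 1. (\<lambda>n. s n * z ^ n) sums f z) \<and>
        norm (s 0) powr p + (\<Sum>n. d n * norm (s (Suc n)) * r ^ Suc n) > 1"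
      using hR dR by (intro Bohr_inequality_Omega_sharp[where R = R, OF h\<gamma> hp d summable]) auto
  qed
qed

end
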